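(* Let $a,b,c$ be positive numbers with $a<b<c$ and $b-a<c_0<a$, where $c_0=c-\lfloor c/b\rfloor b$. Then: (i) $R_{a,b,c}\mathcal D_{a,b,c}=\tilde R_{a,b,c}\mathcal D_{a,b,c}=\mathcal D_{a,b,c}$ and $R_{a,b,c}\mathcal S_{a,b,c}=\tilde R_{a,b,c}\mathcal S_{a,b,c}=\mathcal S_{a,b,c}$; (ii) $R_{a,b,c}(\tilde R_{a,b,c}(t))=\tilde R_{a,b,c}(R_{a,b,c}(t))=t$ for all $t\in\mathcal S_{a,b,c}$ (in particular for all $t\in\mathcal D_{a,b,c}$); (iii) $|R_{a,b,c}(E)|=|\tilde R_{a,b,c}(E)|=|E|$ for every Lebesgue measurable set $E\subset\mathcal S_{a,b,c}$ (in particular for every measurable $E\subset\mathcal D_{a,b,c}$), where $|\cdot|$ is Lebesgue measure.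
   Context: For $a,b,c>0$ and $t\in\mathbb R$, $\mathbf M_{a,b,c}(t)=(\chi_{[0,c)}(t-\mu+\lambda))_{\mu\in a\mathbb Z,\lambda\in b\mathbb Z}$ is the infinite matrix with rows indexed by $a\mathbb Z$ and columns by $b\mathbb Z$, acting by $(\mathbf M_{a,b,c}(t)\mathbf x)(\mu)=\sum_{\lambda\in b\mathbb Z}\chi_{[0,c)}(t-\mu+\lambda)\mathbf x(\lambda)$. $\mathcal B_b$ is the set of vectors $(\mathbf x(\lambda))_{\lambda\in b\mathbb Z}$ with entries in $\{0,1\}$, and $\mathcal B_b^0=\{\mathbf x\in\mathcal B_b:\mathbf x(0)=1\}$. $\mathbf 1,\mathbf 2$ denote the vectors indexed by $a\mathbb Z$ with all entries $1$, resp. $2$. $\mathcal D_{a,b,c}=\{t:\mathbf M_{a,b,c}(t)\mathbf x=\mathbf 2\text{ for some }\mathbf x\in\mathcal B_b^0\}$, $\mathcal S_{a,b,c}=\{t:\mathbf M_{a,b,c}(t)\mathbf x=\mathbf 1\text{ for some }\mathbf x\in\mathcal B_b^0\}$. With $c_0=c-\lfloor c/b\rfloor b$ and $b-a<c_0<a$, the piecewise linear maps $R_{a,b,c},\tilde R_{a,b,c}:\mathbb R\to\mathbb R$ are: $R_{a,b,c}(t)=t+\lfloor c/b\rfloor b+b$ if $t\in[0,c_0+a-b)+a\mathbb Z$, $R_{a,b,c}(t)=t$ if $t\in[c_0+a-b,c_0)+a\mathbb Z$, $R_{a,b,c}(t)=t+\lfloor c/b\rfloor b$ if $t\in[c_0,a)+a\mathbb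 Z$; $\tilde R_{a,b,c}(t)=t-\lfloor c/b\rfloor b$ if $t\in[c-a,c-c_0)+a\mathbb Z$, $\tilde R_{a,b,c}(t)=t$ if $t\in[c-c_0,c-c_0+b-a)+a\mathbb Z$, $\tilde R_{a,b,c}(t)=t-\lfloor c/b\rfloor b-b$ if $t\in[c-c_0+b-a,c)+a\mathbb Z$. Here $A+a\mathbb Z=\{x+ak:x\in A,k\in\mathbb Z\}$. *)

theory Defs
  imports "HOL-Analysis.Analysis"
begin

text \<open>Indices: the row \<mu> = a*j (j::int) of a\<int>, the column \<lambda> = b*l (l::int) of b\<int>.
  A vector indexed by b\<int> is a function int \<Rightarrow> real (x l = x(b l)).\<close>

definition Mact :: "real \<Rightarrow> real \<Rightarrow> real \<Rightarrow> real \<Rightarrow> (int \<Rightarrow> real) \<Rightarrow> int \<Rightarrow> real" where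
  "Mact a b c t x j = (\<Sum>\<^sub>\<infinity> l\<in>(UNIV::int set). indicator {0..<c} (t - a * of_int j + b * of_int l) * x l)"

definition Bvec :: "(int \<Rightarrow> real) set" where
  "Bvec = {x. \<forall>l. x l \<in> {0, 1}}"

definition Bvec0 :: "(int \<Rightarrow> real) set" where
  "Bvec0 = {x \<in> Bvec. x 0 = 1}"

definition Dset :: "real \<Rightarrow> real \<Rightarrow> real \<Rightarrow> real set" where
  "Dset a b c = {t. \<exists>x\<in>Bvec0. \<forall>j. Mact a b c t x j = 2}"

definition Sset :: "real \<Rightarrow> real \<Rightarrow> real \<Rightarrow> real set" where
  "Sset a b c = {t. \<exists>x\<in>Bvec0. \<forall>j. Mact a b c t x j = 1}"

definition c0 :: "real \<Rightarrow> real \<Rightarrow> real" where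
  "c0 b c = c - of_int \<lfloor>c / b\<rfloor> * b"

definition per :: "real \<Rightarrow> real set \<Rightarrow> real set" where
  "per a A = {x + a * of_int k | x k. x \<in> A}"

text \<open>Under b - a < c0 < a the three periodised intervals partition \<real>; the last
  case is taken as the remaining branch.\<close>
definition Rmap :: "real \<Rightarrow> real \<Rightarrow> real \<Rightarrow> real \<Rightarrow> real" where
  "Rmap a b c t =
    (if t \<in> per a {0..<c0 b c + a - b} then t + of_int \<lfloor>c / b\<rfloor> * b + b
     else if t \<in> per a {c0 b c + a - b..<c0 b c} then t
     else t + of_int \<lfloor>c / b\<rfloor> * b)"

definition Rtmap :: "real \<Rightarrow> real \<Rightarrow> real \<Rightarrow> real \<Rightarrow> real" where
  "Rtmap a b c t =
    (if t \<in> per a {c - a..<c - c0 b c} then t - of_int \<lfloor>c / b\<rfloor> * b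
     else if t \<in> per a {c - c0 b c..<c - c0 b c + b - a} then t
     else t - of_int \<lfloor>c / b\<rfloor> * b - b)"

end

theory Submission
  imports Defs
begin

text \<open>Let t lie in S or D, witnessed by x, and let t' be the representative of t modulo a
  in [0, a). Consecutive rows of M(t)x have equal sums, and their windows [aj - t, aj - t + c)
  differ by a shift of a; cancelling the overlap, the sum of x over b\<int> \<inter> [-t', a - t') equals
  the sum over b\<int> \<inter> [c - t', c - t' + a). The first window contains only the lattice point 0,
  where x(0) = 1, so the second contains some bl with x(l) = 1. Writing c = \<lfloor>c/b\<rfloor>b + c0,
  the hypotheses b - a < c0 < a force l \<in> {\<lfloor>c/b\<rfloor>, \<lfloor>c/b\<rfloor> + 1}, decided by the piece of the
  definition of R containing t: thus R(t) = t + bl, and the shifted vector x(\<cdot> + l) witnesses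
  R(t) in the same set. The mirror argument with the window to the left of t gives
  R~(t) = t + bl', and the window of R(t) is the translate of that of t, so R~ undoes R and
  conversely. Finally R and R~ are translations on three measurable pieces and injective on S,
  hence preserve Lebesgue measure.\<close>

definition mod_rep :: "real \<Rightarrow> real \<Rightarrow> real \<Rightarrow> real" where
  "mod_rep a s u = u - a * of_int \<lfloor>(u - s) / a\<rfloor>"

lemma mod_rep_bounds:
  assumes "0 < a"
  shows "s \<le> mod_rep a s u" "mod_rep a s u < s + a"
proof -
  let ?q = "(u - s) / a"
  have "of_int \<lfloor>?q\<rfloor> \<le> ?q" "?q < of_int \<lfloor>?q\<rfloor> + 1"
    by linarith+
  then have "a * of_int \<lfloor>?q\<rfloor> \<le> a * ?q" "a * ?q < a * (of_int \<lfloor>?q\<rfloor> + 1)"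
    using assms by (intro mult_left_mono mult_strict_left_mono; simp)+
  moreover have "a * ?q = u - s"
    using assms by simp
  ultimately have "a * of_int \<lfloor>?q\<rfloor> \<le> u - s" "u - s < a * of_int \<lfloor>?q\<rfloor> + a"
    by (simp_all add: algebra_simps)
  then show "s \<le> mod_rep a s u" "mod_rep a s u < s + a"
    unfolding mod_rep_def by linarith+
qed

lemma mod_rep_decomp: "u = mod_rep a s u + a * of_int \<lfloor>(u - s) / a\<rfloor>"
  unfolding mod_rep_def by simp

lemma mod_rep_add_int_mult:
  assumes "0 < a" "s \<le> v" "v < s + a"
  shows "mod_rep a s (v + a * of_int k) = v"
proof -
  have "\<lfloor>(v - s) / a\<rfloor> = 0"
    using assms by (simp add: floor_eq_iff field_simps)
  moreover have "(v + a * of_int k - s) / a = (v - s) / a + of_int k"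
    using assms by (simp add: field_simps)
  ultimately show ?thesis
    unfolding mod_rep_def by simp
qed

lemma mem_per_iff_mod_rep:
  assumes "0 < a" "s \<le> \<alpha>" "\<beta> \<le> s + a"
  shows "u \<in> per a {\<alpha>..<\<beta>} \<longleftrightarrow> \<alpha> \<le> mod_rep a s u \<and> mod_rep a s u < \<beta>"
proof
  assume "u \<in> per a {\<alpha>..<\<beta>}"
  then obtain v k where "u = v + a * of_int k" "\<alpha> \<le> v" "v < \<beta>"
    unfolding per_def by auto
  with assms show "\<alpha> \<le> mod_rep a s u \<and> mod_rep a s u < \<beta>"
    using mod_rep_add_int_mult by auto
next
  assume "\<alpha> \<le> mod_rep a s u \<and> mod_rep a s u < \<beta>"
  then show "u \<in> per a {\<alpha>..<\<beta>}"
    unfolding per_def using mod_rep_decomp[of u a s] by fastforce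
qed

lemma per_sets_lebesgue:
  assumes "A \<in> sets lebesgue"
  shows "per a A \<in> sets lebesgue"
proof -
  have "per a A = (\<Union>k\<in>(UNIV :: int set). (\<lambda>x. a * of_int k + x) ` A)"
    unfolding per_def by (auto simp: add.commute)
  also have "\<dots> \<in> sets lebesgue"
    by (intro sets.countable_UN') (auto intro: lebesgue_sets_translation[OF assms])
  finally show ?thesis .
qed

definition lattice_window_sum :: "real \<Rightarrow> (int \<Rightarrow> real) \<Rightarrow> real \<Rightarrow> real \<Rightarrow> real" where
  "lattice_window_sum b x u v = sum x {l. u \<le> b * of_int l \<and> b * of_int l < v}"

lemma finite_lattice_window:
  fixes b u v :: real
  assumes "0 < b"
  shows "finite {l::int. u \<le> b * of_int l \<and> b * of_int l < v}"
proof (rule finite_subset)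
  show "{l::int. u \<le> b * of_int l \<and> b * of_int l < v} \<subseteq> {\<lceil>u / b\<rceil> .. \<lfloor>v / b\<rfloor>}"
    using assms by (auto simp: field_simps ceiling_le_iff le_floor_iff)
qed simp

lemma Mact_eq_lattice_window_sum:
  assumes "0 < b"
  shows "Mact a b c t x j = lattice_window_sum b x (a * of_int j - t) (a * of_int j - t + c)"
proof -
  have "Mact a b c t x j
      = (\<Sum>\<^sub>\<infinity> l\<in>{l. a * of_int j - t \<le> b * of_int l \<and> b * of_int l < a * of_int j - t + c}. x l)"
    unfolding Mact_def by (rule infsum_cong_neutral) (auto simp: indicator_def)
  then show ?thesis
    unfolding lattice_window_sum_def using finite_lattice_window[OF assms] by simp
qed

lemma lattice_window_sum_split:
  assumes "0 < b" "u \<le> v" "v \<le> w"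
  shows "lattice_window_sum b x u w = lattice_window_sum b x u v + lattice_window_sum b x v w"
proof -
  have "{l. u \<le> b * of_int l \<and> b * of_int l < w} =
      {l. u \<le> b * of_int l \<and> b * of_int l < v} \<union> {l. v \<le> b * of_int l \<and> b * of_int l < w}"
    using assms by auto
  then show ?thesis
    unfolding lattice_window_sum_def
    by (simp add: sum.union_disjoint finite_lattice_window[OF assms(1)] disjoint_iff)
qed

lemma lattice_window_sum_slide:
  assumes "0 < b" "0 \<le> a" "a \<le> c"
    and "lattice_window_sum b x u (u + c) = lattice_window_sum b x (u + a) (u + a + c)"
  shows "lattice_window_sum b x u (u + a) = lattice_window_sum b x (u + c) (u + c + a)"
  using assms lattice_window_sum_split[OF assms(1), of u "u + a" "u + c" x]
    lattice_window_sum_split[OF assms(1), of "u + a" "u + c" "u + a + c" x]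
  by (simp add: add_ac)

lemma lattice_window_sum_nonzero:
  assumes "lattice_window_sum b x u v \<noteq> 0"
  obtains l where "u \<le> b * of_int l" "b * of_int l < v" "x l \<noteq> 0"
  using assms unfolding lattice_window_sum_def by (auto elim: sum.not_neutral_contains_not_neutral)

lemma lattice_points_far_apart:
  fixes b :: real
  assumes "0 < b" "l \<noteq> n"
  shows "b \<le> \<bar>b * of_int l - b * of_int n\<bar>"
proof -
  have "1 \<le> \<bar>of_int l - of_int n :: real\<bar>"
    using assms(2) by linarith
  then have "b * 1 \<le> b * \<bar>of_int l - of_int n\<bar>"
    using assms(1) by (intro mult_left_mono) auto
  also have "b * \<bar>of_int l - of_int n\<bar> = \<bar>b * of_int l - b * of_int n\<bar>"
    using assms(1) by (simp add: abs_mult flip: right_diff_distrib)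
  finally show ?thesis
    by simp
qed

lemma lattice_window_sum_singleton:
  assumes "0 < b" "v - u \<le> b" "u \<le> b * of_int n" "b * of_int n < v"
  shows "lattice_window_sum b x u v = x n"
proof -
  have "{l. u \<le> b * of_int l \<and> b * of_int l < v} = {n}"
    using assms lattice_points_far_apart[OF assms(1), of _ n] by force
  then show ?thesis
    unfolding lattice_window_sum_def by simp
qed

lemma Mact_shift:
  "Mact a b c (t + of_int k * b) (\<lambda>l. x (l + k)) j = Mact a b c t x j"
proof -
  let ?g = "\<lambda>l. indicator {0..<c} (t - a * of_int j + b * of_int l) * x l"
  have "bij_betw (\<lambda>l::int. l + k) UNIV UNIV"
    by (rule bij_betwI[of _ _ _ "\<lambda>l. l - k"]) auto
  then have "(\<Sum>\<^sub>\<infinity> l. ?g (l + k)) = (\<Sum>\<^sub>\<infinity> l. ?g l)"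
    using infsum_reindex_bij_betw[of "\<lambda>l::int. l + k" UNIV UNIV ?g] by simp
  then show ?thesis
    unfolding Mact_def by (simp add: algebra_simps)
qed

definition level_set :: "real \<Rightarrow> real \<Rightarrow> real \<Rightarrow> real \<Rightarrow> real set" where
  "level_set a b c m = {t. \<exists>x\<in>Bvec0. \<forall>j. Mact a b c t x j = m}"

lemma level_set_shift:
  assumes "x \<in> Bvec0" "\<forall>j. Mact a b c t x j = m" "x k = 1"
  shows "t + of_int k * b \<in> level_set a b c m"
proof -
  have "(\<lambda>l. x (l + k)) \<in> Bvec0"
    using assms(1,3) unfolding Bvec0_def Bvec_def by auto
  moreover have "\<forall>j. Mact a b c (t + of_int k * b) (\<lambda>l. x (l + k)) j = m"
    using assms(2) by (simp add: Mact_shift)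
  ultimately show ?thesis
    unfolding level_set_def by blast
qed

lemma Mact_const_window_slide:
  assumes "0 < b" "0 \<le> a" "a \<le> c" "\<forall>j. Mact a b c t x j = m"
  shows "lattice_window_sum b x (a * of_int j - t) (a * of_int j - t + a)
       = lattice_window_sum b x (a * of_int j - t + c) (a * of_int j - t + c + a)"
proof (rule lattice_window_sum_slide[OF assms(1-3)])
  have "a * of_int (j + 1) - t = a * of_int j - t + a"
    by (simp add: algebra_simps)
  then show "lattice_window_sum b x (a * of_int j - t) (a * of_int j - t + c)
      = lattice_window_sum b x (a * of_int j - t + a) (a * of_int j - t + a + c)"
    using assms(4)[rule_format, of j] assms(4)[rule_format, of "j + 1"]
    by (simp only: Mact_eq_lattice_window_sum[OF assms(1)])
qed

definition image_preserves_measure :: "'a measure \<Rightarrow> ('a \<Rightarrow> 'a) \<Rightarrow> 'a set \<Rightarrow> bool" where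
  "image_preserves_measure M f E \<longleftrightarrow> f ` E \<in> sets M \<and> emeasure M (f ` E) = emeasure M E"

lemma image_preserves_measure_translation:
  fixes E :: "'a::euclidean_space set"
  assumes "E \<in> sets lebesgue" "\<And>x. x \<in> E \<Longrightarrow> f x = x + p"
  shows "image_preserves_measure lebesgue f E"
proof -
  have "f ` E = (\<lambda>x. x + p) ` E"
    using assms(2) by simp
  moreover have "(\<lambda>x. x + p) ` E \<in> sets lebesgue"
    using lebesgue_sets_translation[OF assms(1), of p] by (simp add: add.commute)
  moreover have "emeasure lebesgue ((\<lambda>x. x + p) ` E) = emeasure lebesgue E"
    using emeasure_lebesgue_affine[of 1 p E] by simp
  ultimately show ?thesis
    unfolding image_preserves_measure_def by simp
qed

lemma image_preserves_measure_split:
  assumes "inj_on f E" "E \<in> sets M" "A \<in> sets M"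
    and "image_preserves_measure M f (E \<inter> A)" "image_preserves_measure M f (E - A)"
  shows "image_preserves_measure M f E"
proof -
  have fA: "f ` (E \<inter> A) \<in> sets M" and fB: "f ` (E - A) \<in> sets M"
    using assms(4,5) unfolding image_preserves_measure_def by simp_all
  have "f ` (E \<inter> A) \<inter> f ` (E - A) = {}"
    using inj_on_image_Int[OF assms(1), of "E \<inter> A" "E - A"] by auto
  then have "emeasure M (f ` (E \<inter> A) \<union> f ` (E - A))
      = emeasure M (f ` (E \<inter> A)) + emeasure M (f ` (E - A))"
    using plus_emeasure[OF fA fB] by simp
  also have "\<dots> = emeasure M (E \<inter> A) + emeasure M (E - A)"
    using assms(4,5) unfolding image_preserves_measure_def by simp
  also have "\<dots> = emeasure M E"
    using plus_emeasure[of "E \<inter> A" M "E - A"] assms(2,3) by (auto simp: Int_Diff_Un)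
  finally show ?thesis
    using sets.Un[OF fA fB] unfolding image_preserves_measure_def image_Un[symmetric] Int_Diff_Un
    by simp
qed

lemma image_preserves_measure_piecewise_translation:
  fixes f :: "'a::euclidean_space \<Rightarrow> 'a"
  assumes "inj_on f E" "E \<in> sets lebesgue" "A \<in> sets lebesgue" "B \<in> sets lebesgue"
    and "\<And>t. f t = (if t \<in> A then t + p else if t \<in> B then t + p' else t + p'')"
  shows "image_preserves_measure lebesgue f E"
proof (rule image_preserves_measure_split[OF assms(1-3)])
  show "image_preserves_measure lebesgue f (E \<inter> A)"
    using assms(2,3,5) by (intro image_preserves_measure_translation[where p = p]) auto
  show "image_preserves_measure lebesgue f (E - A)"
  proof (rule image_preserves_measure_split[OF inj_on_subset[OF assms(1)] _ assms(4)])
    show "image_preserves_measure lebesgue f ((E - A) \<inter> B)"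
      using assms(2-5) by (intro image_preserves_measure_translation[where p = p']) auto
    show "image_preserves_measure lebesgue f (E - A - B)"
      using assms(2-5) by (intro image_preserves_measure_translation[where p = p'']) auto
  qed (use assms(2,3) in auto)
qed

definition in_forward_window :: "real \<Rightarrow> real \<Rightarrow> real \<Rightarrow> real \<Rightarrow> int \<Rightarrow> bool" where
  "in_forward_window a b c t l \<longleftrightarrow>
    c - mod_rep a 0 t \<le> b * of_int l \<and> b * of_int l < c - mod_rep a 0 t + a"

definition in_backward_window :: "real \<Rightarrow> real \<Rightarrow> real \<Rightarrow> real \<Rightarrow> int \<Rightarrow> bool" where
  "in_backward_window a b c t l \<longleftrightarrow>
    - a - mod_rep a (c - a) t \<le> b * of_int l \<and> b * of_int l < - mod_rep a (c - a) t"

lemma in_forward_window_imp_in_backward_window: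
  assumes "0 < a" "in_forward_window a b c t l"
  shows "in_backward_window a b c (t + of_int l * b) (- l)"
proof -
  define s where "s = mod_rep a 0 t"
  have "0 \<le> s" "s < a"
    using mod_rep_bounds[OF assms(1), of 0 t] unfolding s_def by auto
  have "t + of_int l * b = (s + b * of_int l - a) + a * of_int (\<lfloor>t / a\<rfloor> + 1)"
    using mod_rep_decomp[of t a 0] unfolding s_def by (simp add: algebra_simps)
  moreover have "c - a \<le> s + b * of_int l - a" "s + b * of_int l - a < c - a + a"
    using assms(2) unfolding in_forward_window_def s_def by linarith+
  ultimately have "mod_rep a (c - a) (t + of_int l * b) = s + b * of_int l - a"
    using mod_rep_add_int_mult[OF assms(1)] by presburger
  then show ?thesis
    unfolding in_backward_window_def using \<open>0 \<le> s\<close> \<open>s < a\<close> by simp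
qed

lemma in_backward_window_imp_in_forward_window:
  assumes "0 < a" "in_backward_window a b c t l"
  shows "in_forward_window a b c (t + of_int l * b) (- l)"
proof -
  define s where "s = mod_rep a (c - a) t"
  have "c - a \<le> s" "s < c"
    using mod_rep_bounds[OF assms(1), of "c - a" t] unfolding s_def by auto
  have "t + of_int l * b = (s + b * of_int l + a) + a * of_int (\<lfloor>(t - (c - a)) / a\<rfloor> - 1)"
    using mod_rep_decomp[of t a "c - a"] unfolding s_def by (simp add: algebra_simps)
  moreover have "0 \<le> s + b * of_int l + a" "s + b * of_int l + a < 0 + a"
    using assms(2) unfolding in_backward_window_def s_def by linarith+
  ultimately have "mod_rep a 0 (t + of_int l * b) = s + b * of_int l + a"
    using mod_rep_add_int_mult[OF assms(1)] by presburger
  then show ?thesis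
    unfolding in_forward_window_def using \<open>c - a \<le> s\<close> \<open>s < c\<close> by simp
qed

locale abc_triple =
  fixes a b c :: real
  assumes a_pos: "0 < a" and a_less_b: "a < b" and b_less_c: "b < c"
    and c0_lower: "b - a < c0 b c" and c0_upper: "c0 b c < a"
begin

abbreviation q :: int where "q \<equiv> \<lfloor>c / b\<rfloor>"
abbreviation r :: real where "r \<equiv> c0 b c"

lemma b_pos: "0 < b"
  using a_pos a_less_b by simp

lemma c_decomp: "c = of_int q * b + r"
  unfolding c0_def by simp

lemma Rmap_eq_lattice_shift:
  assumes "in_forward_window a b c t l"
  shows "Rmap a b c t = t + of_int l * b"
proof -
  define s where "s = mod_rep a 0 t"
  have s: "0 \<le> s" "s < a"
    using mod_rep_bounds[OF a_pos, of 0 t] unfolding s_def by auto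
  have window: "r - s \<le> b * of_int (l - q)" "b * of_int (l - q) < r - s + a"
    using assms c_decomp unfolding in_forward_window_def s_def by (simp_all add: algebra_simps)
  have "b * - 1 < b * of_int (l - q)" "b * of_int (l - q) < b * 2"
    using window s a_less_b c0_lower c0_upper by linarith+
  then have "- 1 < real_of_int (l - q)" "real_of_int (l - q) < 2"
    by (simp_all only: mult_less_cancel_left_pos[OF b_pos])
  then consider "l = q" | "l = q + 1"
    by linarith
  then show ?thesis
  proof cases
    case 1
    then have "r \<le> s"
      using window by simp
    then have "t \<notin> per a {0..<r + a - b}" "t \<notin> per a {r + a - b..<r}"
      using mem_per_iff_mod_rep[OF a_pos, of 0 0 "r + a - b" t]
        mem_per_iff_mod_rep[OF a_pos, of 0 "r + a - b" r t] a_less_b c0_lower c0_upper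
      unfolding s_def by auto
    then show ?thesis
      unfolding Rmap_def using 1 by simp
  next
    case 2
    then have "s < r + a - b"
      using window by (simp add: algebra_simps)
    then have "t \<in> per a {0..<r + a - b}"
      using mem_per_iff_mod_rep[OF a_pos, of 0 0 "r + a - b" t] s a_less_b c0_upper
      unfolding s_def by auto
    then show ?thesis
      unfolding Rmap_def 2 by (simp add: algebra_simps)
  qed
qed

lemma Rtmap_eq_lattice_shift:
  assumes "in_backward_window a b c t l"
  shows "Rtmap a b c t = t + of_int l * b"
proof -
  define s where "s = mod_rep a (c - a) t"
  have s: "c - a \<le> s" "s < c"
    using mod_rep_bounds[OF a_pos, of "c - a" t] unfolding s_def by auto
  have window: "c - s - a - r \<le> b * of_int (l + q)" "b * of_int (l + q) < c - s - r"
    using assms c_decomp unfolding in_backward_window_def s_def by (simp_all add: algebra_simps)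
  have "b * - 2 < b * of_int (l + q)" "b * of_int (l + q) < b * 1"
    using window s a_less_b c0_lower c0_upper by linarith+
  then have "- 2 < real_of_int (l + q)" "real_of_int (l + q) < 1"
    by (simp_all only: mult_less_cancel_left_pos[OF b_pos])
  then consider "l = - q" | "l = - q - 1"
    by linarith
  then show ?thesis
  proof cases
    case 1
    then have "s < c - r"
      using window by simp
    then have "t \<in> per a {c - a..<c - r}"
      using mem_per_iff_mod_rep[OF a_pos, of "c - a" "c - a" "c - r" t] s c0_lower a_less_b
      unfolding s_def by auto
    then show ?thesis
      unfolding Rtmap_def using 1 by simp
  next
    case 2
    then have "b * of_int (l + q) = - b"
      by simp
    then have "c - r + b - a \<le> s"
      using window by linarith
    then have "t \<notin> per a {c - a..<c - r}" "t \<notin> per a {c - r..<c - r + b - a}"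
      using mem_per_iff_mod_rep[OF a_pos, of "c - a" "c - a" "c - r" t]
        mem_per_iff_mod_rep[OF a_pos, of "c - a" "c - r" "c - r + b - a" t] a_less_b c0_lower c0_upper
      unfolding s_def by auto
    then show ?thesis
      unfolding Rtmap_def 2 by (simp add: algebra_simps)
  qed
qed

lemma level_set_forward_window_witness:
  assumes "t \<in> level_set a b c m"
  obtains x l where "x \<in> Bvec0" "\<forall>j. Mact a b c t x j = m" "in_forward_window a b c t l" "x l = 1"
proof -
  obtain x where x: "x \<in> Bvec0" and M: "\<forall>j. Mact a b c t x j = m"
    using assms unfolding level_set_def by blast
  define s where "s = mod_rep a 0 t"
  have s: "0 \<le> s" "s < a"
    using mod_rep_bounds[OF a_pos, of 0 t] unfolding s_def by auto
  have row: "a * of_int \<lfloor>t / a\<rfloor> - t = - s"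
    using mod_rep_decomp[of t a 0] unfolding s_def by simp
  have "lattice_window_sum b x (- s) (- s + a) = lattice_window_sum b x (- s + c) (- s + c + a)"
    using Mact_const_window_slide[OF b_pos _ _ M, of "\<lfloor>t / a\<rfloor>"] a_pos a_less_b b_less_c
    unfolding row by simp
  then have "lattice_window_sum b x (- s) (- s + a) = lattice_window_sum b x (c - s) (c - s + a)"
    by (simp add: add_ac)
  moreover have "lattice_window_sum b x (- s) (- s + a) = 1"
    using lattice_window_sum_singleton[OF b_pos, of "- s + a" "- s" 0 x] x s a_less_b
    unfolding Bvec0_def by simp
  ultimately obtain l where "c - s \<le> b * of_int l" "b * of_int l < c - s + a" "x l \<noteq> 0"
    using lattice_window_sum_nonzero[of b x "c - s" "c - s + a"] by auto
  moreover have "x l = 1"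
    using x \<open>x l \<noteq> 0\<close> unfolding Bvec0_def Bvec_def by auto
  ultimately show thesis
    using that x M unfolding in_forward_window_def s_def by blast
qed

lemma level_set_backward_window_witness:
  assumes "t \<in> level_set a b c m"
  obtains x l where "x \<in> Bvec0" "\<forall>j. Mact a b c t x j = m" "in_backward_window a b c t l" "x l = 1"
proof -
  obtain x where x: "x \<in> Bvec0" and M: "\<forall>j. Mact a b c t x j = m"
    using assms unfolding level_set_def by blast
  define s where "s = mod_rep a (c - a) t"
  have s: "c - a \<le> s" "s < c"
    using mod_rep_bounds[OF a_pos, of "c - a" t] unfolding s_def by auto
  have row: "a * of_int (\<lfloor>(t - (c - a)) / a\<rfloor> - 1) - t = - a - s"
    using mod_rep_decomp[of t a "c - a"] unfolding s_def by (simp add: algebra_simps)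
  have "lattice_window_sum b x (- a - s) (- a - s + a)
      = lattice_window_sum b x (- a - s + c) (- a - s + c + a)"
    using Mact_const_window_slide[OF b_pos _ _ M, of "\<lfloor>(t - (c - a)) / a\<rfloor> - 1"] a_pos a_less_b b_less_c
    unfolding row by simp
  then have "lattice_window_sum b x (- a - s) (- s) = lattice_window_sum b x (c - a - s) (c - s)"
    by (simp add: algebra_simps)
  moreover have "lattice_window_sum b x (c - a - s) (c - s) = 1"
    using lattice_window_sum_singleton[OF b_pos, of "c - s" "c - a - s" 0 x] x s a_less_b
    unfolding Bvec0_def by simp
  ultimately obtain l where "- a - s \<le> b * of_int l" "b * of_int l < - s" "x l \<noteq> 0"
    using lattice_window_sum_nonzero[of b x "- a - s" "- s"] by auto
  moreover have "x l = 1"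
    using x \<open>x l \<noteq> 0\<close> unfolding Bvec0_def Bvec_def by auto
  ultimately show thesis
    using that x M unfolding in_backward_window_def s_def by blast
qed

lemma Rmap_mem_level_set:
  assumes "t \<in> level_set a b c m"
  shows "Rmap a b c t \<in> level_set a b c m"
proof -
  obtain x l where "x \<in> Bvec0" "\<forall>j. Mact a b c t x j = m" "in_forward_window a b c t l" "x l = 1"
    using level_set_forward_window_witness[OF assms] .
  then show ?thesis
    using level_set_shift Rmap_eq_lattice_shift by simp
qed

lemma Rtmap_mem_level_set:
  assumes "t \<in> level_set a b c m"
  shows "Rtmap a b c t \<in> level_set a b c m"
proof -
  obtain x l where "x \<in> Bvec0" "\<forall>j. Mact a b c t x j = m" "in_backward_window a b c t l" "x l = 1"
    using level_set_backward_window_witness[OF assms] .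
  then show ?thesis
    using level_set_shift Rtmap_eq_lattice_shift by simp
qed

lemma Rtmap_Rmap_level_set:
  assumes "t \<in> level_set a b c m"
  shows "Rtmap a b c (Rmap a b c t) = t"
proof -
  obtain l where l: "in_forward_window a b c t l"
    using level_set_forward_window_witness[OF assms] by metis
  then have "in_backward_window a b c (t + of_int l * b) (- l)"
    by (rule in_forward_window_imp_in_backward_window[OF a_pos])
  then show ?thesis
    using Rmap_eq_lattice_shift[OF l] Rtmap_eq_lattice_shift by simp
qed

lemma Rmap_Rtmap_level_set:
  assumes "t \<in> level_set a b c m"
  shows "Rmap a b c (Rtmap a b c t) = t"
proof -
  obtain l where l: "in_backward_window a b c t l"
    using level_set_backward_window_witness[OF assms] by metis
  then have "in_forward_window a b c (t + of_int l * b) (- l)"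
    by (rule in_backward_window_imp_in_forward_window[OF a_pos])
  then show ?thesis
    using Rtmap_eq_lattice_shift[OF l] Rmap_eq_lattice_shift by simp
qed

lemma Rmap_image_level_set: "Rmap a b c ` level_set a b c m = level_set a b c m"
proof
  show "Rmap a b c ` level_set a b c m \<subseteq> level_set a b c m"
    using Rmap_mem_level_set by blast
  show "level_set a b c m \<subseteq> Rmap a b c ` level_set a b c m"
    using Rtmap_mem_level_set Rmap_Rtmap_level_set by (metis image_eqI subsetI)
qed

lemma Rtmap_image_level_set: "Rtmap a b c ` level_set a b c m = level_set a b c m"
proof
  show "Rtmap a b c ` level_set a b c m \<subseteq> level_set a b c m"
    using Rtmap_mem_level_set by blast
  show "level_set a b c m \<subseteq> Rtmap a b c ` level_set a b c m"
    using Rmap_mem_level_set Rtmap_Rmap_level_set by (metis image_eqI subsetI)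
qed

lemma Rmap_image_preserves_measure:
  assumes "E \<in> sets lebesgue" "E \<subseteq> level_set a b c m"
  shows "image_preserves_measure lebesgue (Rmap a b c) E"
proof (rule image_preserves_measure_piecewise_translation)
  show "inj_on (Rmap a b c) E"
    using assms(2) Rtmap_Rmap_level_set by (intro inj_on_inverseI[where g = "Rtmap a b c"]) blast
  show "Rmap a b c t = (if t \<in> per a {0..<r + a - b} then t + (of_int q * b + b)
      else if t \<in> per a {r + a - b..<r} then t + 0 else t + of_int q * b)" for t
    unfolding Rmap_def by (simp add: add_ac)
qed (simp_all add: assms(1) per_sets_lebesgue)

lemma Rtmap_image_preserves_measure:
  assumes "E \<in> sets lebesgue" "E \<subseteq> level_set a b c m"
  shows "image_preserves_measure lebesgue (Rtmap a b c) E"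
proof (rule image_preserves_measure_piecewise_translation)
  show "inj_on (Rtmap a b c) E"
    using assms(2) Rmap_Rtmap_level_set by (intro inj_on_inverseI[where g = "Rmap a b c"]) blast
  show "Rtmap a b c t = (if t \<in> per a {c - a..<c - r} then t + - (of_int q * b)
      else if t \<in> per a {c - r..<c - r + b - a} then t + 0 else t + (- (of_int q * b) - b))" for t
    unfolding Rtmap_def by (simp add: algebra_simps)
qed (simp_all add: assms(1) per_sets_lebesgue)

end

theorem proposition3p8:
  fixes a b c :: real
  assumes "0 < a" and "a < b" and "b < c"
    and "b - a < c0 b c" and "c0 b c < a"
  shows "Rmap a b c ` Dset a b c = Dset a b c \<and> Rtmap a b c ` Dset a b c = Dset a b c
    \<and> Rmap a b c ` Sset a b c = Sset a b c \<and> Rtmap a b c ` Sset a b c = Sset a b c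
    \<and> (\<forall>t\<in>Sset a b c. Rmap a b c (Rtmap a b c t) = t \<and> Rtmap a b c (Rmap a b c t) = t)
    \<and> (\<forall>t\<in>Dset a b c. Rmap a b c (Rtmap a b c t) = t \<and> Rtmap a b c (Rmap a b c t) = t)
    \<and> (\<forall>E. E \<in> sets lebesgue \<and> E \<subseteq> Sset a b c \<longrightarrow>
           Rmap a b c ` E \<in> sets lebesgue \<and> Rtmap a b c ` E \<in> sets lebesgue \<and>
           emeasure lebesgue (Rmap a b c ` E) = emeasure lebesgue E \<and>
           emeasure lebesgue (Rtmap a b c ` E) = emeasure lebesgue E)
    \<and> (\<forall>E. E \<in> sets lebesgue \<and> E \<subseteq> Dset a b c \<longrightarrow>
           Rmap a b c ` E \<in> sets lebesgue \<and> Rtmap a b c ` E \<in> sets lebesgue \<and>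
           emeasure lebesgue (Rmap a b c ` E) = emeasure lebesgue E \<and>
           emeasure lebesgue (Rtmap a b c ` E) = emeasure lebesgue E)"
proof -
  interpret abc_triple a b c
    using assms by unfold_locales
  have D: "Dset a b c = level_set a b c 2" and S: "Sset a b c = level_set a b c 1"
    unfolding Dset_def Sset_def level_set_def by simp_all
  have inverse: "\<forall>t\<in>level_set a b c m. Rmap a b c (Rtmap a b c t) = t \<and> Rtmap a b c (Rmap a b c t) = t"
    for m
    using Rmap_Rtmap_level_set Rtmap_Rmap_level_set by blast
  have measure: "\<forall>E. E \<in> sets lebesgue \<and> E \<subseteq> level_set a b c m \<longrightarrow>
      Rmap a b c ` E \<in> sets lebesgue \<and> Rtmap a b c ` E \<in> sets lebesgue \<and>
      emeasure lebesgue (Rmap a b c ` E) = emeasure lebesgue E \<and>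
      emeasure lebesgue (Rtmap a b c ` E) = emeasure lebesgue E" for m
    using Rmap_image_preserves_measure Rtmap_image_preserves_measure
    unfolding image_preserves_measure_def by blast
  show ?thesis
    unfolding D S using Rmap_image_level_set Rtmap_image_level_set inverse measure by (intro conjI)
qed

end
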